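(* There is a deterministic algorithm which, given the level of every vertex of $G$ and access to a matrix-vector oracle $q\mapsto Mq$ (over $GF(2)$) for the adjacency matrix $M$ of $G$, correctly determines the parent of every non-root vertex of $G$ using $O(\log^2 n)$ oracle queries, where $G$ is any directed graph on vertex set $[n]$ that is the reflexive transitive closure of a branching.
   Context: A branching is a forest of rooted trees with all edges directed away from the roots; its reflexive transitive closure adds an edge $(u,w)$ whenever $w$ is reachable from $u$, including a loop at every vertex. The adjacency matrix $M\in\{0,1\}^{n\times n}$ has $M_{j,i}=1$ iff $(i,j)$ is an edge of $G$. The level of a vertex is its depth in the underlying branching (roots on level $0$); the parent of a vertex on level $\ell\geq1$ is its parent in the branching, i.e. its unique in-neighbor in $G$ on level $\ell-1$. *)

theory Defs
  imports Complex_Main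
begin

definition branching :: "nat \<Rightarrow> (nat \<times> nat) set \<Rightarrow> bool" where
  "branching n B \<longleftrightarrow> B \<subseteq> {0..<n} \<times> {0..<n} \<and> acyclic B \<and>
     (\<forall>j. card {i. (i, j) \<in> B} \<le> 1)"

definition closure_graph :: "nat \<Rightarrow> (nat \<times> nat) set \<Rightarrow> nat \<Rightarrow> nat \<Rightarrow> bool" where
  "closure_graph n B i j \<longleftrightarrow> i < n \<and> j < n \<and> (i, j) \<in> B\<^sup>*"

definition level :: "(nat \<times> nat) set \<Rightarrow> nat \<Rightarrow> nat" where
  "level B v = card {u. u \<noteq> v \<and> (u, v) \<in> B\<^sup>*}"

text \<open>Matrix-vector product over GF(2) (bool = GF(2)) for the adjacency matrix M of the
graph E, with M_{j,i} = 1 iff (i,j) is an edge. Vectors are bool lists of length n;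
a query list is read with zero padding.\<close>
definition mat_vec_oracle :: "nat \<Rightarrow> (nat \<Rightarrow> nat \<Rightarrow> bool) \<Rightarrow> bool list \<Rightarrow> bool list" where
  "mat_vec_oracle n E q = map (\<lambda>j. odd (card {i. i < n \<and> E i j \<and> i < length q \<and> q ! i})) [0..<n]"

text \<open>Deterministic adaptive oracle algorithms, as decision trees: either stop with a
result, or ask a query vector and continue depending on the answer.\<close>
datatype 'r qtree = Leaf 'r | Ask "bool list" "bool list \<Rightarrow> 'r qtree"

primrec run :: "(bool list \<Rightarrow> bool list) \<Rightarrow> 'r qtree \<Rightarrow> 'r \<times> nat" where
  "run orc (Leaf r) = (r, 0)"
| "run orc (Ask q k) = (let rc = run orc (k (orc q)) in (fst rc, Suc (snd rc)))"

end

theory Submission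
  imports Defs "HOL-Library.Log_Nat"
begin

text \<open>
  Call level u + 1 the depth of u, and let K = ceillog2 n. For k, b < K, query (k, b) selects
  the vertices whose depth has lowest set bit 2^k and whose name has bit b set; its answer at x is
  the parity of the number of selected ancestors of x. Let w be the ancestor of v at depth
  c 2^(k+1), where the depth of v is at most (c + 1) 2^(k+1). Of the ancestors of v that are not
  ancestors of w, only the one at depth c 2^(k+1) + 2^k (if it exists) has lowest depth bit 2^k,
  so comparing the answers at v and at w for b = 0, ..., K - 1 spells out its name.
  Going through rounds k = K - 1, ..., 0 from a virtual root at depth 0 thus reaches the ancestor
  of v at depth 2^k floor(level v / 2^k) after round k, and finally the one at depth level v,
  which is the parent. These are K^2 = O(log^2 n) non-adaptive queries.
\<close>

lemma eq_of_mod_eq_in_block: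
  fixes c m r x :: nat
  assumes "c * m < x" "x \<le> c * m + m" "x mod m = r" "0 < r"
  shows "x = c * m + r"
proof -
  have "0 < m" using assms by (cases "m = 0") auto
  have x: "x div m * m + r = x" using assms(3) div_mult_mod_eq[of x m] by simp
  have "r < m" using assms(3) \<open>0 < m\<close> by auto
  have "x div m * m < Suc c * m" using x assms(2,4) unfolding mult_Suc by linarith
  then have "x div m < Suc c" by (rule mult_right_less_imp_less) simp
  moreover have "c * m < Suc (x div m) * m" using x assms(1) \<open>r < m\<close> unfolding mult_Suc by linarith
  then have "c < Suc (x div m)" by (rule mult_right_less_imp_less) simp
  ultimately have "x div m = c" by simp
  then show ?thesis using x by simp
qed

lemma times_div_two_power_Suc:
  "(2::nat) ^ k * (l div 2 ^ k) = 2 ^ Suc k * (l div 2 ^ Suc k) + 2 ^ k * of_bool (bit l k)"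
proof -
  define q where "q = l div 2 ^ k"
  have "l div 2 ^ Suc k = q div 2" using div_exp_eq[of l k 1] by (simp add: q_def)
  moreover have "q mod 2 = of_bool (bit l k)" by (simp add: q_def bit_iff_odd mod2_eq_if)
  moreover have "q = 2 * (q div 2) + q mod 2" by simp
  ultimately have "q = 2 * (l div 2 ^ Suc k) + of_bool (bit l k)" by simp
  then show ?thesis unfolding q_def by (simp add: algebra_simps)
qed

lemma ceillog2_squared_le:
  assumes "2 \<le> n"
  shows "real (ceillog2 n * ceillog2 n) \<le> 4 / (ln 2)\<^sup>2 * (ln (real n))\<^sup>2"
proof -
  have "1 \<le> log 2 (real n)" using assms by simp
  then have K: "real (ceillog2 n) \<le> 2 * log 2 (real n)" using ceillog2_less_log[of n] assms by linarith
  have "real (ceillog2 n * ceillog2 n) = (real (ceillog2 n))\<^sup>2" by (simp add: power2_eq_square)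
  also have "\<dots> \<le> (2 * log 2 (real n))\<^sup>2" using K by (intro power_mono) simp_all
  also have "\<dots> = 4 / (ln 2)\<^sup>2 * (ln (real n))\<^sup>2" by (simp add: log_def power_divide field_simps)
  finally show ?thesis .
qed

lemma branching_finite: "branching n B \<Longrightarrow> finite B"
  unfolding branching_def by (meson finite_SigmaI finite_atLeastLessThan finite_subset)

lemma branching_parent_unique:
  assumes "branching n B" "(p, v) \<in> B" "(q, v) \<in> B"
  shows "p = q"
proof -
  have "{i. (i, v) \<in> B} \<subseteq> Domain B" by auto
  then have "finite {i. (i, v) \<in> B}"
    using finite_Domain[OF branching_finite[OF assms(1)]] by (rule finite_subset)
  moreover have "card {i. (i, v) \<in> B} \<le> Suc 0"
    using assms(1) unfolding branching_def by simp
  ultimately show ?thesis using assms(2,3) by (auto simp: card_le_Suc0_iff_eq)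
qed

definition ancestors :: "('a \<times> 'a) set \<Rightarrow> 'a \<Rightarrow> 'a set" where
  "ancestors B v = {u. (u, v) \<in> B\<^sup>*}"

lemma self_in_ancestors [simp]: "v \<in> ancestors B v"
  unfolding ancestors_def by simp

lemma ancestors_trans:
  assumes "u \<in> ancestors B v"
  shows "ancestors B u \<subseteq> ancestors B v"
proof
  fix x assume "x \<in> ancestors B u"
  with assms show "x \<in> ancestors B v"
    unfolding ancestors_def mem_Collect_eq by (rule rtrancl_trans[rotated])
qed

lemma ancestors_subset_Domain: "ancestors B v \<subseteq> insert v (Domain B)"
  unfolding ancestors_def by (auto elim: converse_rtranclE)

lemma finite_ancestors: "finite B \<Longrightarrow> finite (ancestors B v)"
  using ancestors_subset_Domain by (metis finite_Domain finite_insert finite_subset)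

lemma ancestors_less:
  assumes "branching n B" "v < n" "u \<in> ancestors B v"
  shows "u < n"
proof -
  have "u = v \<or> u \<in> Domain B" using subsetD[OF ancestors_subset_Domain assms(3)] by simp
  then show ?thesis using assms(1,2) unfolding branching_def by auto
qed

lemma card_ancestors:
  assumes "finite B"
  shows "card (ancestors B v) = Suc (level B v)"
proof -
  have "{u. u \<noteq> v \<and> (u, v) \<in> B\<^sup>*} = ancestors B v - {v}"
    unfolding ancestors_def by blast
  then have "level B v = card (ancestors B v - {v})"
    unfolding level_def by simp
  moreover have "card (ancestors B v) = Suc (card (ancestors B v - {v}))"
    using finite_ancestors[OF assms] self_in_ancestors by (rule card.remove)
  ultimately show ?thesis by linarith
qed

lemma level_less:
  assumes "branching n B" "v < n"
  shows "level B v < n"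
proof -
  have "card (ancestors B v) \<le> card {..<n}"
    using ancestors_less[OF assms] by (intro card_mono) auto
  then show ?thesis using card_ancestors[OF branching_finite[OF assms(1)]] by simp
qed

lemma level_no_parent:
  assumes "\<And>p. (p, v) \<notin> B"
  shows "level B v = 0"
proof -
  have no_proper: "{u. u \<noteq> v \<and> (u, v) \<in> B\<^sup>*} = {}" using assms by (auto elim: rtranclE)
  show ?thesis unfolding level_def no_proper by simp
qed

lemma level_mono:
  assumes "finite B" "u \<in> ancestors B v"
  shows "level B u \<le> level B v"
proof -
  have "card (ancestors B u) \<le> card (ancestors B v)"
    using finite_ancestors[OF assms(1)] ancestors_trans[OF assms(2)] by (rule card_mono)
  then show ?thesis using card_ancestors[OF assms(1)] by simp
qed

lemma not_in_ancestors_of_ancestor: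
  assumes "branching n B" "u \<in> ancestors B v" "u \<noteq> v"
  shows "v \<notin> ancestors B u"
proof
  assume "v \<in> ancestors B u"
  have "(u, v) \<in> B\<^sup>*" using assms(2) unfolding ancestors_def by simp
  then have "(u, v) \<in> B\<^sup>+" using assms(3) by (simp add: rtrancl_eq_or_trancl)
  moreover have "(v, u) \<in> B\<^sup>*" using \<open>v \<in> ancestors B u\<close> unfolding ancestors_def by simp
  ultimately have "(u, u) \<in> B\<^sup>+" by (rule trancl_rtrancl_trancl)
  then show False using assms(1) unfolding branching_def acyclic_def by blast
qed

lemma level_strict_mono:
  assumes "branching n B" "u \<in> ancestors B v" "u \<noteq> v"
  shows "level B u < level B v"
proof -
  have "ancestors B u \<subset> ancestors B v"
    using ancestors_trans[OF assms(2)] not_in_ancestors_of_ancestor[OF assms] by auto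
  then have "card (ancestors B u) < card (ancestors B v)"
    using finite_ancestors[OF branching_finite[OF assms(1)]] by (rule psubset_card_mono[rotated])
  then show ?thesis using card_ancestors[OF branching_finite[OF assms(1)]] by simp
qed

lemma ancestors_linear:
  assumes "branching n B" "x \<in> ancestors B v" "u \<in> ancestors B v"
  shows "x \<in> ancestors B u \<or> u \<in> ancestors B x"
proof -
  have "(x, v) \<in> B\<^sup>*" "(u, v) \<in> B\<^sup>*" using assms(2,3) unfolding ancestors_def by auto
  then show ?thesis
  proof (induction arbitrary: u rule: rtrancl_induct)
    case base
    then show ?case unfolding ancestors_def by simp
  next
    case (step y z)
    from \<open>(u, z) \<in> B\<^sup>*\<close> show ?case
    proof (cases rule: rtranclE)
      case base
      then show ?thesis using step.hyps unfolding ancestors_def by auto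
    next
      case (step y')
      then have "y' = y" using branching_parent_unique[OF assms(1)] \<open>(y, z) \<in> B\<close> by blast
      then show ?thesis using step.IH step by blast
    qed
  qed
qed

lemma inj_on_level_ancestors:
  assumes "branching n B"
  shows "inj_on (level B) (ancestors B v)"
proof (rule inj_onI)
  fix x u assume "x \<in> ancestors B v" "u \<in> ancestors B v" "level B x = level B u"
  then show "x = u"
    using ancestors_linear[OF assms] level_strict_mono[OF assms] by (metis less_irrefl)
qed

lemma level_image_ancestors:
  assumes "branching n B"
  shows "level B ` ancestors B v = {..level B v}"
proof -
  have fin: "finite B" using branching_finite[OF assms] .
  have "level B ` ancestors B v \<subseteq> {..level B v}" using level_mono[OF fin] by auto
  moreover have "card (level B ` ancestors B v) = card {..level B v}"
    using card_image[OF inj_on_level_ancestors[OF assms]] card_ancestors[OF fin] by simp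
  ultimately show ?thesis by (simp add: card_subset_eq)
qed

lemma ancestors_of_ancestor:
  assumes "branching n B" "u \<in> ancestors B v"
  shows "ancestors B u = {x \<in> ancestors B v. level B x \<le> level B u}"
proof
  show "ancestors B u \<subseteq> {x \<in> ancestors B v. level B x \<le> level B u}"
    using ancestors_trans[OF assms(2)] level_mono[OF branching_finite[OF assms(1)]] by auto
  show "{x \<in> ancestors B v. level B x \<le> level B u} \<subseteq> ancestors B u"
    using ancestors_linear[OF assms(1) _ assms(2)] level_strict_mono[OF assms(1)]
    by (fastforce simp: not_le[symmetric])
qed

lemma level_parent:
  assumes "branching n B" "(p, v) \<in> B"
  shows "level B v = Suc (level B p)"
proof -
  have "ancestors B v = insert v (ancestors B p)"
  proof (intro equalityI subsetI)
    fix x assume "x \<in> ancestors B v"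
    then have "(x, v) \<in> B\<^sup>*" unfolding ancestors_def by simp
    then show "x \<in> insert v (ancestors B p)"
    proof (cases rule: rtranclE)
      case (step y)
      then have "y = p" using branching_parent_unique[OF assms(1) _ assms(2)] by blast
      with step show ?thesis unfolding ancestors_def by simp
    qed simp
  next
    fix x assume "x \<in> insert v (ancestors B p)"
    then show "x \<in> ancestors B v"
    proof
      assume "x \<in> ancestors B p"
      then show ?thesis using rtrancl_into_rtrancl[OF _ assms(2)] unfolding ancestors_def by simp
    qed simp
  qed
  moreover have "v \<notin> ancestors B p"
  proof (rule not_in_ancestors_of_ancestor[OF assms(1)])
    show "p \<in> ancestors B v" using assms(2) unfolding ancestors_def by simp
    show "p \<noteq> v" using assms unfolding branching_def acyclic_def by auto
  qed
  ultimately show ?thesis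
    using card_ancestors[OF branching_finite[OF assms(1)]] finite_ancestors[OF branching_finite[OF assms(1)]]
    by (metis card_insert_disjoint Suc_inject)
qed

lemma ancestor_is_parent:
  assumes br: "branching n B" and u: "u \<in> ancestors B v" "Suc (level B u) = level B v"
  shows "(u, v) \<in> B"
proof -
  obtain p where p: "(p, v) \<in> B" using level_no_parent u(2) by (metis Zero_not_Suc)
  have "p \<in> ancestors B v" using p unfolding ancestors_def by simp
  moreover have "level B p = level B u" using level_parent[OF br p] u(2) by simp
  ultimately have "u = p" using inj_onD[OF inj_on_level_ancestors[OF br, where v = v]] u(1) by auto
  then show ?thesis using p by simp
qed

definition entry :: "bool list \<Rightarrow> nat \<Rightarrow> bool" where
  "entry a i \<longleftrightarrow> i < length a \<and> a ! i"

lemma entry_closure_oracle: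
  assumes "branching n B" "x < n"
  shows "entry (mat_vec_oracle n (closure_graph n B) (map P [0..<n])) x
    \<longleftrightarrow> odd (card {u \<in> ancestors B x. P u})"
proof -
  have "{i. i < n \<and> closure_graph n B i x \<and> i < length (map P [0..<n]) \<and> map P [0..<n] ! i}
      = {u \<in> ancestors B x. P u}"
    using ancestors_less[OF assms] assms(2) unfolding closure_graph_def ancestors_def by auto
  then show ?thesis using assms(2) unfolding entry_def mat_vec_oracle_def by simp
qed

lemma not_entry_oracle: "n \<le> i \<Longrightarrow> \<not> entry (mat_vec_oracle n E q) i"
  unfolding entry_def mat_vec_oracle_def by simp

primrec ask_batch :: "'i list \<Rightarrow> ('i \<Rightarrow> bool list) \<Rightarrow> (('i \<Rightarrow> bool list) \<Rightarrow> 'r) \<Rightarrow> 'r qtree" where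
  "ask_batch [] Q f = Leaf (f (\<lambda>_. []))"
| "ask_batch (i # is) Q f = Ask (Q i) (\<lambda>a. ask_batch is Q (\<lambda>g. f (g(i := a))))"

lemma run_ask_batch:
  "run orc (ask_batch is Q f) = (f (\<lambda>i. if i \<in> set is then orc (Q i) else []), length is)"
proof (induction "is" arbitrary: f)
  case (Cons i "is")
  have "(\<lambda>j. if j \<in> set is then orc (Q j) else [])(i := orc (Q i))
      = (\<lambda>j. if j \<in> set (i # is) then orc (Q j) else [])"
    by auto
  then show ?case using Cons.IH by (simp add: Let_def)
qed simp

definition marked :: "(nat \<times> nat) set \<Rightarrow> nat \<Rightarrow> nat \<Rightarrow> bool" where
  "marked B k u \<longleftrightarrow> Suc (level B u) mod 2 ^ Suc k = 2 ^ k"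

definition query :: "nat \<Rightarrow> nat list \<Rightarrow> nat \<Rightarrow> nat \<Rightarrow> bool list" where
  "query n lv k b = map (\<lambda>u. Suc (lv ! u) mod 2 ^ Suc k = 2 ^ k \<and> bit u b) [0..<n]"

lemma entry_query:
  assumes "branching n B" "x < n"
  shows "entry (mat_vec_oracle n (closure_graph n B) (query n (map (level B) [0..<n]) k b)) x
    \<longleftrightarrow> odd (card {u \<in> ancestors B x. marked B k u \<and> bit u b})"
proof -
  have "query n (map (level B) [0..<n]) k b = map (\<lambda>u. marked B k u \<and> bit u b) [0..<n]"
    unfolding query_def marked_def by (rule map_cong) auto
  then show ?thesis using entry_closure_oracle[OF assms] by simp
qed

text \<open>
  The vertex name n stands for a virtual root at depth 0: every answer vector reads False
  there, the parity of its empty set of ancestors.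
\<close>

definition ancestor_at_depth :: "(nat \<times> nat) set \<Rightarrow> nat \<Rightarrow> nat \<Rightarrow> nat \<Rightarrow> nat \<Rightarrow> bool" where
  "ancestor_at_depth B n v t w \<longleftrightarrow> (t = 0 \<and> w = n) \<or> (w \<in> ancestors B v \<and> Suc (level B w) = t)"

definition decode :: "nat \<Rightarrow> (nat \<times> nat \<Rightarrow> bool list) \<Rightarrow> nat \<Rightarrow> nat \<Rightarrow> nat \<Rightarrow> nat" where
  "decode K g k v w = horner_sum of_bool 2 (map (\<lambda>b. entry (g (k, b)) v \<noteq> entry (g (k, b)) w) [0..<K])"

primrec descend :: "nat \<Rightarrow> (nat \<times> nat \<Rightarrow> bool list) \<Rightarrow> nat \<Rightarrow> nat \<Rightarrow> nat \<Rightarrow> nat \<Rightarrow> nat" where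
  "descend K g v l w 0 = w"
| "descend K g v l w (Suc k) = descend K g v l (if bit l k then decode K g k v w else w) k"

definition valid_round :: "(nat \<times> nat) set \<Rightarrow> nat \<Rightarrow> nat \<Rightarrow> (nat \<times> nat \<Rightarrow> bool list) \<Rightarrow> nat \<Rightarrow> bool" where
  "valid_round B n K g k \<longleftrightarrow> (\<forall>b<K. \<not> entry (g (k, b)) n \<and>
     (\<forall>x<n. entry (g (k, b)) x \<longleftrightarrow> odd (card {u \<in> ancestors B x. marked B k u \<and> bit u b})))"

lemma marked_ancestors_window:
  assumes br: "branching n B"
    and lv: "level B v < c * 2 ^ Suc k + 2 ^ Suc k"
    and a: "a \<in> ancestors B v" "Suc (level B a) = c * 2 ^ Suc k + 2 ^ k"
  shows "{u \<in> ancestors B v. marked B k u}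
    = insert a {u \<in> ancestors B v. level B u < c * 2 ^ Suc k \<and> marked B k u}"
proof (intro equalityI subsetI)
  fix u assume u: "u \<in> {u \<in> ancestors B v. marked B k u}"
  show "u \<in> insert a {u \<in> ancestors B v. level B u < c * 2 ^ Suc k \<and> marked B k u}"
  proof (cases "level B u < c * 2 ^ Suc k")
    case False
    have "level B u \<le> level B v" using level_mono[OF branching_finite[OF br]] u by simp
    then have "Suc (level B u) \<le> c * 2 ^ Suc k + 2 ^ Suc k" using lv by linarith
    moreover have "c * 2 ^ Suc k < Suc (level B u)" using False by simp
    ultimately have "Suc (level B u) = c * 2 ^ Suc k + 2 ^ k"
      using u unfolding marked_def by (intro eq_of_mod_eq_in_block) simp_all
    then have "u = a"
      using inj_onD[OF inj_on_level_ancestors[OF br, where v = v], of u a] a u by auto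
    then show ?thesis by simp
  qed (use u in simp)
next
  have "marked B k a" using a(2) unfolding marked_def by simp
  then show "u \<in> {u \<in> ancestors B v. marked B k u}"
    if "u \<in> insert a {u \<in> ancestors B v. level B u < c * 2 ^ Suc k \<and> marked B k u}" for u
    using that a(1) by auto
qed

lemma entry_ancestor_at_depth:
  assumes br: "branching n B" and v: "v < n" and round: "valid_round B n K g k"
    and w: "ancestor_at_depth B n v t w" and b: "b < K"
  shows "entry (g (k, b)) w
    \<longleftrightarrow> odd (card {u \<in> ancestors B v. level B u < t \<and> marked B k u \<and> bit u b})"
  using w unfolding ancestor_at_depth_def
proof (elim disjE conjE)
  assume "t = 0" "w = n"
  then show ?thesis using round b unfolding valid_round_def by simp
next
  assume w: "w \<in> ancestors B v" "Suc (level B w) = t"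
  then have "ancestors B w = {u \<in> ancestors B v. level B u < t}"
    unfolding ancestors_of_ancestor[OF br w(1)] by auto
  then show ?thesis
    using round b ancestors_less[OF br v w(1)] unfolding valid_round_def by (simp add: conj_assoc)
qed

lemma decode_correct:
  assumes br: "branching n B" and v: "v < n" and nK: "n \<le> 2 ^ K"
    and round: "valid_round B n K g k"
    and w: "ancestor_at_depth B n v (c * 2 ^ Suc k) w"
    and lv: "level B v < c * 2 ^ Suc k + 2 ^ Suc k"
    and a: "a \<in> ancestors B v" "Suc (level B a) = c * 2 ^ Suc k + 2 ^ k"
  shows "decode K g k v w = a"
proof -
  define W where "W = {u \<in> ancestors B v. level B u < c * 2 ^ Suc k}"
  have "W \<subseteq> ancestors B v" unfolding W_def by blast
  then have "finite W" using finite_ancestors[OF branching_finite[OF br]] by (rule finite_subset)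
  have "(0::nat) < 2 ^ k" by simp
  with a(2) have "\<not> level B a < c * 2 ^ Suc k" by linarith
  then have "a \<notin> W" unfolding W_def by blast
  have marked_split: "{u \<in> ancestors B v. marked B k u} = insert a {u \<in> W. marked B k u}"
    using marked_ancestors_window[OF br lv a] unfolding W_def by auto
  have entry_w: "entry (g (k, b)) w \<longleftrightarrow> odd (card {u \<in> W. marked B k u \<and> bit u b})"
    if "b < K" for b
    using entry_ancestor_at_depth[OF br v round w that] unfolding W_def by (simp add: conj_assoc)
  have "entry (g (k, b)) v \<noteq> entry (g (k, b)) w \<longleftrightarrow> bit a b" if "b < K" for b
  proof -
    have "card {u \<in> ancestors B v. marked B k u \<and> bit u b}
        = card {u \<in> W. marked B k u \<and> bit u b} + of_bool (bit a b)"
    proof (cases "bit a b")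
      case True
      then have "{u \<in> ancestors B v. marked B k u \<and> bit u b} = insert a {u \<in> W. marked B k u \<and> bit u b}"
        using marked_split \<open>W \<subseteq> ancestors B v\<close> unfolding set_eq_iff by auto
      then show ?thesis using True \<open>a \<notin> W\<close> \<open>finite W\<close> by simp
    next
      case False
      then have "{u \<in> ancestors B v. marked B k u \<and> bit u b} = {u \<in> W. marked B k u \<and> bit u b}"
        using marked_split \<open>W \<subseteq> ancestors B v\<close> unfolding set_eq_iff by auto
      then show ?thesis using False by simp
    qed
    then show ?thesis using round that v entry_w[OF that] unfolding valid_round_def by auto
  qed
  then have "decode K g k v w = horner_sum of_bool 2 (map (bit a) [0..<K])"
    unfolding decode_def by (intro arg_cong[where f = "horner_sum of_bool 2"] map_cong) auto
  also have "\<dots> = take_bit K a" by (rule horner_sum_bit_eq_take_bit)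
  also have "\<dots> = a" using ancestors_less[OF br v a(1)] nK by (simp add: take_bit_nat_eq_self)
  finally show ?thesis .
qed

lemma descend_step:
  assumes br: "branching n B" and v: "v < n" and nK: "n \<le> 2 ^ K"
    and round: "valid_round B n K g k"
    and w: "ancestor_at_depth B n v (2 ^ Suc k * (level B v div 2 ^ Suc k)) w"
  shows "ancestor_at_depth B n v (2 ^ k * (level B v div 2 ^ k))
    (if bit (level B v) k then decode K g k v w else w)"
proof -
  define l where "l = level B v"
  define c where "c = l div 2 ^ Suc k"
  have depth: "2 ^ k * (l div 2 ^ k) = c * 2 ^ Suc k + 2 ^ k * of_bool (bit l k)"
    using times_div_two_power_Suc[of k l] unfolding c_def by (simp only: mult.commute)
  have w: "ancestor_at_depth B n v (c * 2 ^ Suc k) w"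
    using w unfolding c_def l_def by (simp only: mult.commute)
  show ?thesis
  proof (cases "bit l k")
    case False
    then have "2 ^ k * (l div 2 ^ k) = c * 2 ^ Suc k" using depth by simp
    then show ?thesis using w False unfolding l_def[symmetric] by (simp only: if_False)
  next
    case True
    have "2 ^ k * (l div 2 ^ k) \<le> l" by (simp add: times_div_less_eq_dividend)
    then have "c * 2 ^ Suc k + 2 ^ k - 1 \<in> level B ` ancestors B v"
      using True depth level_image_ancestors[OF br, of v] unfolding l_def by auto
    then obtain a where "a \<in> ancestors B v" and "level B a = c * 2 ^ Suc k + 2 ^ k - 1"
      by (metis imageE)
    then have a: "a \<in> ancestors B v" "Suc (level B a) = c * 2 ^ Suc k + 2 ^ k" by simp_all
    have "l mod 2 ^ Suc k < 2 ^ Suc k" by simp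
    then have "level B v < c * 2 ^ Suc k + 2 ^ Suc k"
      using div_mult_mod_eq[of l "2 ^ Suc k"] unfolding c_def l_def by linarith
    then have "decode K g k v w = a" by (rule decode_correct[OF br v nK round w _ a])
    then show ?thesis using True a depth unfolding l_def ancestor_at_depth_def by simp
  qed
qed

lemma descend_correct:
  assumes br: "branching n B" and v: "v < n" and nK: "n \<le> 2 ^ K"
    and w: "ancestor_at_depth B n v (2 ^ m * (level B v div 2 ^ m)) w"
    and rounds: "\<And>k. k < m \<Longrightarrow> valid_round B n K g k"
  shows "ancestor_at_depth B n v (level B v) (descend K g v (level B v) w m)"
  using w rounds
proof (induction m arbitrary: w)
  case (Suc k)
  then show ?case using descend_step[OF br v nK] by simp
qed simp

definition find_parents :: "nat \<Rightarrow> nat list \<Rightarrow> nat list qtree" where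
  "find_parents n lv = (let K = ceillog2 n in
     ask_batch (List.product [0..<K] [0..<K]) (\<lambda>(k, b). query n lv k b)
       (\<lambda>g. map (\<lambda>v. descend K g v (lv ! v) n K) [0..<n]))"

lemma find_parents_query_count:
  "snd (run orc (find_parents n lv)) = ceillog2 n * ceillog2 n"
  unfolding find_parents_def Let_def run_ask_batch by simp

lemma find_parents_correct:
  assumes br: "branching n B" and v: "v < n" "1 \<le> level B v"
  shows "(fst (run (mat_vec_oracle n (closure_graph n B)) (find_parents n (map (level B) [0..<n]))) ! v, v)
    \<in> B"
proof -
  define K where "K = ceillog2 n"
  define lv where "lv = map (level B) [0..<n]"
  define orc where "orc = mat_vec_oracle n (closure_graph n B)"
  define g where "g = (\<lambda>i. if i \<in> set (List.product [0..<K] [0..<K])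
    then orc (case i of (k, b) \<Rightarrow> query n lv k b) else [])"
  have nK: "n \<le> 2 ^ K" unfolding K_def by (rule le_two_power_ceillog2)
  have rounds: "valid_round B n K g k" if "k < K" for k
    using that unfolding valid_round_def g_def orc_def lv_def
    by (simp add: entry_query[OF br] not_entry_oracle)
  have "ancestor_at_depth B n v (2 ^ K * (level B v div 2 ^ K)) n"
    using level_less[OF br v(1)] nK unfolding ancestor_at_depth_def by simp
  then have "ancestor_at_depth B n v (level B v) (descend K g v (level B v) n K)"
    by (rule descend_correct[OF br v(1) nK _ rounds])
  moreover have "fst (run orc (find_parents n lv)) ! v = descend K g v (level B v) n K"
    unfolding find_parents_def Let_def run_ask_batch K_def g_def lv_def using v(1) by simp
  ultimately have "ancestor_at_depth B n v (level B v) (fst (run orc (find_parents n lv)) ! v)"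
    by simp
  then show ?thesis
    using v(2) ancestor_is_parent[OF br] unfolding ancestor_at_depth_def orc_def lv_def by auto
qed

theorem lemma23:
  "\<exists>(A :: nat \<Rightarrow> nat list \<Rightarrow> nat list qtree) (c :: real).
     \<forall>n B. n \<ge> 2 \<longrightarrow> branching n B \<longrightarrow>
       (let res = run (mat_vec_oracle n (closure_graph n B))
                      (A n (map (level B) [0..<n]))
        in (\<forall>v<n. level B v \<ge> 1 \<longrightarrow> (fst res ! v, v) \<in> B)
           \<and> real (snd res) \<le> c * (ln (real n))\<^sup>2)"
proof (intro exI allI impI)
  fix n B assume n: "2 \<le> n" and br: "branching n B"
  show "let res = run (mat_vec_oracle n (closure_graph n B)) (find_parents n (map (level B) [0..<n]))
    in (\<forall>v<n. level B v \<ge> 1 \<longrightarrow> (fst res ! v, v) \<in> B)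
       \<and> real (snd res) \<le> 4 / (ln 2)\<^sup>2 * (ln (real n))\<^sup>2"
    using find_parents_correct[OF br] find_parents_query_count ceillog2_squared_le[OF n]
    by (simp add: Let_def)
qed

end
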